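(* Under the standing assumptions in the context, there exist a neighborhood $\mathcal U$ of $(0,\bar X)$ and $C>0$ such that for every multi-index $\alpha$ with $|\alpha|=1$ and every $(t,X)\in\mathcal U\cap\{t>0\}$, \[ |\partial_X^\alpha\lambda_1|\le C a^{3/2},\qquad |\partial_X^\alpha\lambda_2|\le C\sqrt a,\qquad |\partial_X^\alpha\lambda_3|\le C\sqrt a . \]
   Context: Let $W\subset\mathbb R^l$ be open, $\bar X\in W$, $c,T>0$, and let $a(t,X),b(t,X)$ be real-valued $C^\infty$ functions on $(-c,T)\times W$ with bounded derivatives of all orders. Assume $\Delta(t,X):=4a(t,X)^3-27b(t,X)^2\ge 0$ on $[0,T)\times W$, $a(0,\bar X)=0$, and $a(t,X)>0$ on $(0,T)\times W$. Let $S(t,X)=\begin{bmatrix}3&0&-a\\0&2a&3b\\-a&3b&a^2\end{bmatrix}$ and let $0\le\lambda_1\le\lambda_2\le\lambda_3$ be its eigenvalues (which are smooth on $\mathcal U\cap\{t>0\}$ for a small neighborhood $\mathcal U$ of $(0,\bar X)$). *)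

theory Defs
  imports "HOL-Analysis.Analysis"
begin

text \<open>Dg vs is the iterated derivative of g in the directions of the list vs; the (Frechet)
  derivative of Dg vs at x is the linear map h maps to Dg (h # vs) x.\<close>
definition smooth_bdd_on :: "'a::euclidean_space set \<Rightarrow> ('a \<Rightarrow> real) \<Rightarrow> bool" where
  "smooth_bdd_on S g \<longleftrightarrow>
     (\<exists>Dg :: 'a list \<Rightarrow> 'a \<Rightarrow> real.
        (\<forall>x\<in>S. Dg [] x = g x) \<and>
        (\<forall>vs. \<forall>x\<in>S. (Dg vs has_derivative (\<lambda>h. Dg (h # vs) x)) (at x)) \<and>
        (\<forall>vs. set vs \<subseteq> Basis \<longrightarrow> bounded (Dg vs ` S)))"

definition Smat :: "real \<Rightarrow> real \<Rightarrow> real^3^3" where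
  "Smat a b = vector [vector [3, 0, - a], vector [0, 2 * a, 3 * b], vector [- a, 3 * b, a ^ 2]]"

definition eigs3 :: "real^3^3 \<Rightarrow> real \<times> real \<times> real" where
  "eigs3 M = (THE e. case e of (l1, l2, l3) \<Rightarrow>
      l1 \<le> l2 \<and> l2 \<le> l3 \<and> (\<forall>\<mu>. det (\<mu> *\<^sub>R mat 1 - M) = (\<mu> - l1) * (\<mu> - l2) * (\<mu> - l3)))"

definition eig :: "nat \<Rightarrow> real^3^3 \<Rightarrow> real" where
  "eig k M = (case eigs3 M of (l1, l2, l3) \<Rightarrow> if k = 1 then l1 else if k = 2 then l2 else l3)"

end

theory Submission
  imports Defs
begin

text \<open>
  The eigenvalues of \<open>S\<close> are the roots of its characteristic polynomial, whose constant term is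
  \<open>27b\<^sup>2 - 4a\<^sup>3 \<le> 0\<close>. For small \<open>a > 0\<close> sign changes of this cubic separate the roots:
  \<open>\<lambda>\<^sub>1 \<in> [0, a\<^sup>2)\<close>, \<open>\<lambda>\<^sub>2 \<in> (a, 3a)\<close>, \<open>\<lambda>\<^sub>3 \<in> (1, 5)\<close>. Simple roots move differentiably, with
  \<open>\<lambda>\<^sub>k' = - \<partial>P(\<lambda>\<^sub>k) / \<Prod>\<^sub>j\<^sub>\<noteq>\<^sub>k (\<lambda>\<^sub>k - \<lambda>\<^sub>j)\<close>, where \<open>\<partial>P\<close> differentiates the coefficients.

  Along a coordinate line put \<open>\<sigma> = sqrt a\<close>. Glaeser's inequality for the nonnegative function
  \<open>a\<close> gives \<open>|a'| = O(\<sigma>)\<close> and \<open>a = O(\<sigma>\<^sup>2)\<close> on \<open>[-\<sigma>, \<sigma>]\<close>; hyperbolicity \<open>27b\<^sup>2 \<le> 4a\<^sup>3\<close> turns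
  this into \<open>b = O(\<sigma>\<^sup>3)\<close> there, and a third order Taylor expansion into \<open>|b'| = O(\<sigma>\<^sup>2)\<close>. So the
  numerators \<open>\<partial>P(\<lambda>\<^sub>k)\<close> are \<open>O(\<sigma>\<^sup>5), O(\<sigma>\<^sup>3), O(\<sigma>)\<close> and the denominators are of order
  \<open>\<sigma>\<^sup>2, \<sigma>\<^sup>2, 1\<close>.
\<close>

section \<open>Taylor estimates on an interval\<close>

lemma Taylor_remainder_abs_le:
  fixes G :: "nat \<Rightarrow> real \<Rightarrow> real"
  assumes "0 < n"
    and deriv: "\<And>m s. m < n \<Longrightarrow> \<bar>s\<bar> \<le> h \<Longrightarrow> DERIV (G m) s :> G (Suc m) s"
    and bound: "\<And>s. \<bar>s\<bar> \<le> h \<Longrightarrow> \<bar>G n s\<bar> \<le> M" and x: "\<bar>x\<bar> \<le> h"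
  shows "\<bar>G 0 x - (\<Sum>m<n. G m 0 / fact m * x^m)\<bar> \<le> M * \<bar>x\<bar>^n / fact n"
proof (cases "x = 0")
  case True
  have "(\<Sum>m<n. G m 0 / fact m * x^m) = G 0 0"
    using \<open>0 < n\<close> True by (cases n) (simp_all add: sum.lessThan_Suc_shift)
  then show ?thesis using True bound[of 0] x \<open>0 < n\<close> by simp
next
  case False
  have "\<forall>m t. m < n \<and> -h \<le> t \<and> t \<le> h \<longrightarrow> DERIV (G m) t :> G (Suc m) t"
    using deriv by (simp add: abs_le_iff)
  then obtain t where between: "if x < 0 then x < t \<and> t < 0 else 0 < t \<and> t < x"
    and taylor: "G 0 x = (\<Sum>m<n. G m 0 / fact m * (x - 0)^m) + G n t / fact n * (x - 0)^n"
    using Taylor[of n G "G 0" "-h" h 0 x] x False \<open>0 < n\<close> by (auto simp: abs_le_iff)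
  have t: "\<bar>t\<bar> \<le> \<bar>x\<bar>" using between by (auto split: if_splits)
  have "\<bar>G n t / fact n * x^n\<bar> = \<bar>G n t\<bar> * \<bar>x\<bar>^n / fact n" by (simp add: abs_mult power_abs)
  also have "\<dots> \<le> M * \<bar>x\<bar>^n / fact n"
    using bound[of t] t x by (simp add: divide_right_mono mult_right_mono)
  finally show ?thesis using taylor by simp
qed

lemma glaeser_inequality:
  fixes G :: "nat \<Rightarrow> real \<Rightarrow> real"
  assumes deriv: "\<And>m s. m < 2 \<Longrightarrow> \<bar>s\<bar> \<le> h \<Longrightarrow> DERIV (G m) s :> G (Suc m) s"
    and bound: "\<And>s. \<bar>s\<bar> \<le> h \<Longrightarrow> \<bar>G 2 s\<bar> \<le> M"
    and nonneg: "\<And>s. \<bar>s\<bar> \<le> h \<Longrightarrow> 0 \<le> G 0 s" and "0 < h"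
  shows "\<bar>G 1 0\<bar> * h \<le> G 0 0 + M * h^2 / 2"
proof -
  have taylor: "\<bar>G 0 x - (G 0 0 + G 1 0 * x)\<bar> \<le> M * x^2 / 2" if "\<bar>x\<bar> \<le> h" for x
    using Taylor_remainder_abs_le[where n=2 and G=G and h=h and M=M and x=x] deriv bound that by (simp add: numeral_2_eq_2)
  have "G 0 h - (G 0 0 + G 1 0 * h) \<le> M * h^2 / 2"
    "G 0 (-h) - (G 0 0 - G 1 0 * h) \<le> M * h^2 / 2"
    using abs_le_D1[OF taylor[of h]] abs_le_D1[OF taylor[of "-h"]] \<open>0 < h\<close> by simp_all
  moreover have "\<bar>G 1 0\<bar> * h = \<bar>G 1 0 * h\<bar>" using \<open>0 < h\<close> by (simp add: abs_mult)
  ultimately show ?thesis using nonneg[of h] nonneg[of "-h"] \<open>0 < h\<close> by (simp add: abs_le_iff)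
qed

lemma nonneg_function_sqrt_scale_bounds:
  fixes G :: "nat \<Rightarrow> real \<Rightarrow> real"
  assumes deriv: "\<And>m s. m < 2 \<Longrightarrow> \<bar>s\<bar> \<le> h \<Longrightarrow> DERIV (G m) s :> G (Suc m) s"
    and bound: "\<And>s. \<bar>s\<bar> \<le> h \<Longrightarrow> \<bar>G 2 s\<bar> \<le> M"
    and nonneg: "\<And>s. \<bar>s\<bar> \<le> h \<Longrightarrow> 0 \<le> G 0 s" and "G 0 0 = h^2" "0 < h"
  shows "\<bar>G 1 0\<bar> \<le> (1 + M/2) * h" and "\<bar>x\<bar> \<le> h \<Longrightarrow> G 0 x \<le> (2 + M) * h^2"
proof -
  have "\<bar>G 1 0\<bar> * h \<le> ((1 + M/2) * h) * h"
    using glaeser_inequality[OF deriv bound nonneg \<open>0 < h\<close>] \<open>G 0 0 = h^2\<close>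
    by (simp add: power2_eq_square algebra_simps)
  then show G1: "\<bar>G 1 0\<bar> \<le> (1 + M/2) * h" using \<open>0 < h\<close> by simp
  assume "\<bar>x\<bar> \<le> h"
  have "\<bar>G 0 x - (G 0 0 + G 1 0 * x)\<bar> \<le> M * \<bar>x\<bar>^2 / 2"
    using Taylor_remainder_abs_le[where n=2 and G=G and h=h and M=M and x=x] deriv bound \<open>\<bar>x\<bar> \<le> h\<close>
    by (simp add: numeral_2_eq_2)
  moreover have "G 1 0 * x \<le> \<bar>G 1 0\<bar> * \<bar>x\<bar>" by (metis abs_ge_self abs_mult)
  ultimately have "G 0 x \<le> G 0 0 + \<bar>G 1 0\<bar> * \<bar>x\<bar> + M * \<bar>x\<bar>^2 / 2" by linarith
  also have "\<dots> \<le> h^2 + (1 + M/2) * h * h + M * h^2 / 2"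
    using \<open>G 0 0 = h^2\<close> G1 \<open>\<bar>x\<bar> \<le> h\<close> bound[of 0] \<open>0 < h\<close>
    by (intro add_mono mult_mono divide_right_mono power_mono order.refl) auto
  also have "\<dots> = (2 + M) * h^2" by (simp add: power2_eq_square algebra_simps)
  finally show "G 0 x \<le> (2 + M) * h^2" .
qed

lemma deriv_bound_by_third_deriv:
  fixes G :: "nat \<Rightarrow> real \<Rightarrow> real"
  assumes deriv: "\<And>m s. m < 3 \<Longrightarrow> \<bar>s\<bar> \<le> h \<Longrightarrow> DERIV (G m) s :> G (Suc m) s"
    and bound: "\<And>s. \<bar>s\<bar> \<le> h \<Longrightarrow> \<bar>G 3 s\<bar> \<le> M" and "0 < h"
  shows "2 * \<bar>G 1 0\<bar> * h \<le> \<bar>G 0 h\<bar> + \<bar>G 0 (-h)\<bar> + M * h^3 / 3"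
proof -
  have taylor: "\<bar>G 0 x - (G 0 0 + G 1 0 * x + G 2 0 / 2 * x^2)\<bar> \<le> M * \<bar>x\<bar>^3 / 6"
    if "\<bar>x\<bar> \<le> h" for x
    using Taylor_remainder_abs_le[where n=3 and G=G and h=h and M=M and x=x] deriv bound that
    by (simp add: eval_nat_numeral fact_numeral algebra_simps)
  have "\<bar>G 0 h - (G 0 0 + G 1 0 * h + G 2 0 / 2 * h^2)\<bar> \<le> M * h^3 / 6"
    "\<bar>G 0 (-h) - (G 0 0 - G 1 0 * h + G 2 0 / 2 * h^2)\<bar> \<le> M * h^3 / 6"
    using taylor[of h] taylor[of "-h"] \<open>0 < h\<close> by simp_all
  then have "2 * \<bar>G 1 0 * h\<bar> \<le> \<bar>G 0 h\<bar> + \<bar>G 0 (-h)\<bar> + M * h^3 / 3" by linarith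
  then show ?thesis using \<open>0 < h\<close> by (simp add: abs_mult)
qed

lemma abs_le_of_cubic_discriminant:
  fixes x y c h :: real
  assumes "27*y^2 \<le> 4*x^3" "x \<le> c*h^2" "1 \<le> c" "0 \<le> h"
  shows "\<bar>y\<bar> \<le> c^2 * h^3"
proof (rule power2_le_imp_le)
  have "0 \<le> x^3" using assms(1) by (smt (verit) zero_le_power2)
  then have "0 \<le> x" by (simp add: zero_le_odd_power)
  then have "x^3 \<le> (c*h^2)^3" by (intro power_mono assms(2))
  moreover have "c^3 * h^6 \<le> c^4 * h^6"
    using assms(3,4) by (intro mult_right_mono) (simp_all add: power_increasing)
  moreover have "0 \<le> c^4 * h^6" using assms(3,4) by simp
  moreover have "(c*h^2)^3 = c^3 * h^6" by (simp add: power_mult_distrib flip: power_mult)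
  ultimately have "y^2 \<le> c^4 * h^6" using assms(1) \<open>x^3 \<le> (c*h^2)^3\<close> by linarith
  then show "\<bar>y\<bar>^2 \<le> (c^2 * h^3)^2" by (simp add: power_mult_distrib flip: power_mult)
qed (use assms in simp)

lemma abs_minus_divide_mult_le:
  fixes p u w N m1 m2 :: real
  assumes "\<bar>p\<bar> \<le> N * (m1*m2)" "0 < m1" "m1 \<le> \<bar>u\<bar>" "0 < m2" "m2 \<le> \<bar>w\<bar>"
  shows "\<bar>- p / (u*w)\<bar> \<le> N"
proof -
  have "0 \<le> N * (m1*m2)" using assms(1) by (meson abs_ge_zero order_trans)
  then have "0 \<le> N" using mult_pos_pos[OF assms(2,4)] by (simp add: zero_le_mult_iff)
  moreover have "m1*m2 \<le> \<bar>u\<bar>*\<bar>w\<bar>" using assms by (intro mult_mono) auto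
  ultimately have "\<bar>p\<bar> \<le> N * (\<bar>u\<bar>*\<bar>w\<bar>)" using assms(1) by (meson mult_left_mono order_trans)
  moreover have "0 < \<bar>u\<bar>*\<bar>w\<bar>" using assms by simp
  ultimately show ?thesis by (simp add: abs_divide abs_mult pos_divide_le_eq)
qed

section \<open>Simple roots of a family of polynomials\<close>

lemma tendsto_root_of_factorization:
  fixes f r q :: "'a \<Rightarrow> real"
  assumes "(f \<longlongrightarrow> 0) F" "\<forall>\<^sub>F s in F. \<bar>f s\<bar> = \<bar>r s - r0\<bar> * q s"
    "\<forall>\<^sub>F s in F. \<delta> \<le> q s" "0 < \<delta>"
  shows "(r \<longlongrightarrow> r0) F"
proof -
  have "\<forall>\<^sub>F s in F. norm (r s - r0) \<le> \<bar>f s\<bar> / \<delta>"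
    using assms(2,3)
  proof eventually_elim
    case (elim s)
    have "\<bar>r s - r0\<bar> * \<delta> \<le> \<bar>r s - r0\<bar> * q s" using elim by (simp add: mult_left_mono)
    then show ?case using elim assms(4) by (simp add: field_simps)
  qed
  moreover have "((\<lambda>s. \<bar>f s\<bar> / \<delta>) \<longlongrightarrow> 0) F"
    using tendsto_divide[OF tendsto_rabs[OF assms(1)] tendsto_const[of \<delta>]] assms(4) by simp
  ultimately have "((\<lambda>s. r s - r0) \<longlongrightarrow> 0) F" by (rule Lim_null_comparison)
  then show ?thesis by (simp add: LIM_zero_iff)
qed

lemma has_real_derivative_root_of_factorization:
  fixes f r q :: "real \<Rightarrow> real"
  assumes f: "(f has_real_derivative f') (at x)" "f x = 0"
    and factor: "\<forall>\<^sub>F s in at x. f s = (r x - r s) * q s"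
    and q: "(q \<longlongrightarrow> q0) (at x)" "q0 \<noteq> 0"
  shows "(r has_real_derivative - f' / q0) (at x)"
proof -
  have "((\<lambda>s. (f s - f x) / (s - x)) \<longlongrightarrow> f') (at x)"
    using f(1) by (simp add: has_field_derivative_iff)
  then have lim: "((\<lambda>s. - ((f s - f x) / (s - x)) / q s) \<longlongrightarrow> - f' / q0) (at x)"
    by (intro tendsto_intros q)
  have "\<forall>\<^sub>F s in at x. q s \<noteq> 0" using q tendsto_imp_eventually_ne by blast
  with factor have "\<forall>\<^sub>F s in at x. - ((f s - f x) / (s - x)) / q s = (r s - r x) / (s - x)"
  proof eventually_elim
    case (elim s)
    have "f s - f x = - ((r s - r x) * q s)" using elim(1) f(2) by (simp add: algebra_simps)
    then show ?case using elim(2) by simp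
  qed
  with lim have "((\<lambda>s. (r s - r x) / (s - x)) \<longlongrightarrow> - f' / q0) (at x)"
    by (rule Lim_transform_eventually)
  then show ?thesis by (simp add: has_field_derivative_iff)
qed

text \<open>The separation of the roots at \<open>x\<close> from the nearby roots first yields their continuity.\<close>
lemma simple_roots_has_derivative:
  fixes P :: "real \<Rightarrow> real \<Rightarrow> real" and r :: "'i \<Rightarrow> real \<Rightarrow> real"
  assumes "finite I"
    and factor: "\<forall>\<^sub>F s in nhds x. \<forall>\<mu>. P s \<mu> = (\<Prod>j\<in>I. \<mu> - r j s)"
    and deriv: "\<And>\<mu>. ((\<lambda>s. P s \<mu>) has_real_derivative P' \<mu>) (at x)"
    and sep: "\<forall>\<^sub>F s in nhds x. \<forall>j\<in>I. \<forall>k\<in>I. j \<noteq> k \<longrightarrow> \<delta> \<le> \<bar>r k x - r j s\<bar>" "0 < \<delta>"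
    and "k \<in> I"
  shows "(r k has_real_derivative - P' (r k x) / (\<Prod>j\<in>I-{k}. r k x - r j x)) (at x)"
proof -
  have split: "\<forall>\<^sub>F s in nhds x. \<forall>k\<in>I. P s (r k x) = (r k x - r k s) * (\<Prod>j\<in>I-{k}. r k x - r j s)"
    using factor by eventually_elim (use \<open>finite I\<close> in \<open>simp add: prod.remove\<close>)
  then have split_at: "\<forall>\<^sub>F s in at x. \<forall>k\<in>I. P s (r k x) = (r k x - r k s) * (\<Prod>j\<in>I-{k}. r k x - r j s)"
    by (simp add: eventually_nhds_conv_at)
  have zero: "P x (r k x) = 0" if "k \<in> I" for k
    using eventually_nhds_x_imp_x[OF split] that by simp
  have tendsto_P: "((\<lambda>s. P s (r k x)) \<longlongrightarrow> 0) (at x)" if "k \<in> I" for k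
    using DERIV_isCont[OF deriv[of "r k x"]] zero[OF that] by (simp add: isCont_def)
  have cont: "(r k \<longlongrightarrow> r k x) (at x)" if "k \<in> I" for k
  proof (rule tendsto_root_of_factorization[OF tendsto_P[OF that]])
    show "\<forall>\<^sub>F s in at x. \<bar>P s (r k x)\<bar> = \<bar>r k s - r k x\<bar> * (\<Prod>j\<in>I-{k}. \<bar>r k x - r j s\<bar>)"
      using split_at by eventually_elim (use that in \<open>simp add: abs_mult abs_prod abs_minus_commute\<close>)
    have "\<forall>\<^sub>F s in at x. \<forall>j\<in>I. \<forall>k\<in>I. j \<noteq> k \<longrightarrow> \<delta> \<le> \<bar>r k x - r j s\<bar>"
      using sep(1) by (simp add: eventually_nhds_conv_at)
    then show "\<forall>\<^sub>F s in at x. (\<Prod>j\<in>I-{k}. \<delta>) \<le> (\<Prod>j\<in>I-{k}. \<bar>r k x - r j s\<bar>)"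
      by eventually_elim (rule prod_mono, use that sep(2) in auto)
  qed (use sep(2) in simp)
  have "(\<Prod>j\<in>I-{k}. r k x - r j x) \<noteq> 0"
    using eventually_nhds_x_imp_x[OF sep(1)] sep(2) \<open>finite I\<close> \<open>k \<in> I\<close>
    by (force simp: prod_zero_iff)
  moreover have "((\<lambda>s. \<Prod>j\<in>I-{k}. r k x - r j s) \<longlongrightarrow> (\<Prod>j\<in>I-{k}. r k x - r j x)) (at x)"
    using cont by (intro tendsto_intros) auto
  ultimately show ?thesis
    using split_at zero \<open>k \<in> I\<close>
    by (intro has_real_derivative_root_of_factorization[OF deriv]) (auto elim: eventually_mono)
qed

section \<open>The eigenvalues of \<open>S\<close> and their derivatives\<close>

definition charpoly_S :: "real \<Rightarrow> real \<Rightarrow> real \<Rightarrow> real" where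
  "charpoly_S a b \<mu> =
     \<mu>^3 - (3 + 2*a + a^2)*\<mu>^2 + (6*a + 2*a^2 + 2*a^3 - 9*b^2)*\<mu> - (4*a^3 - 27*b^2)"

lemma det_Smat: "det (\<mu> *\<^sub>R mat 1 - Smat a b) = charpoly_S a b \<mu>"
  unfolding det_3 Smat_def charpoly_S_def
  by (simp add: vector_def mat_def power2_eq_square power3_eq_cube algebra_simps)

text \<open>The regime in which the three eigenvalues live at the separated scales \<open>a\<^sup>2\<close>, \<open>a\<close>, \<open>1\<close>.\<close>
definition small_hyperbolic :: "real \<Rightarrow> real \<Rightarrow> bool" where
  "small_hyperbolic a b \<longleftrightarrow> 0 < a \<and> a \<le> 1/100 \<and> 27*b^2 \<le> 4*a^3"

lemma charpoly_S_sign_changes: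
  assumes "small_hyperbolic a b"
  shows "charpoly_S a b 0 \<le> 0" "0 < charpoly_S a b (a^2)" "0 < charpoly_S a b a"
    "charpoly_S a b (3*a) < 0" "charpoly_S a b 1 < 0" "0 < charpoly_S a b 5"
proof -
  have a: "0 < a" "a \<le> 1/100" "27*b^2 \<le> 4*a^3"
    using assms by (auto simp: small_hyperbolic_def)
  have a2: "a^2 \<le> a/100" and a3: "a^3 \<le> a^2/100" and a4: "a^4 \<le> a^3/100"
    using a mult_left_mono[of a "1/100" "a^n" for n]
    by (auto simp: power2_eq_square power3_eq_cube power4_eq_xxxx)
  have ab: "a*b^2 \<le> b^2/100" "a^2*b^2 \<le> b^2/100"
    using a a2 mult_right_mono[of _ "1/100" "b^2"] by auto
  have pos: "0 < a^2" "0 < a^3" "0 < a^4" "0 \<le> b^2" "0 \<le> a*b^2" "0 \<le> a^2*b^2"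
    using a by auto
  note expand = charpoly_S_def algebra_simps power2_eq_square power3_eq_cube power4_eq_xxxx
  show "charpoly_S a b 0 \<le> 0" using a by (simp add: charpoly_S_def)
  have "charpoly_S a b (a^2) = 2*a^3 - a^4 + 27*b^2 - 9*(a^2*b^2)" by (simp add: expand)
  then show "0 < charpoly_S a b (a^2)" using a a2 a3 a4 ab pos by linarith
  have "charpoly_S a b a = 3*a^2 - 3*a^3 + a^4 + 27*b^2 - 9*(a*b^2)" by (simp add: expand)
  then show "0 < charpoly_S a b a" using a a2 a3 a4 ab pos by linarith
  have "charpoly_S a b (3*a) = -9*a^2 + 11*a^3 - 3*a^4 + 27*b^2 - 27*(a*b^2)" by (simp add: expand)
  then show "charpoly_S a b (3*a) < 0" using a a2 a3 a4 ab pos by linarith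
  have "charpoly_S a b 1 = -2 + 4*a + a^2 - 2*a^3 + 18*b^2" by (simp add: expand)
  then show "charpoly_S a b 1 < 0" using a a2 a3 a4 ab pos by linarith
  have "charpoly_S a b 5 = 50 - 20*a - 15*a^2 + 6*a^3 - 18*b^2" by (simp add: expand)
  then show "0 < charpoly_S a b 5" using a a2 a3 a4 ab pos by linarith
qed

lemma monic_cubic_eq_prod_roots:
  fixes A B C r1 r2 r3 \<mu> :: real
  assumes "r1^3 + A*r1^2 + B*r1 + C = 0" "r2^3 + A*r2^2 + B*r2 + C = 0"
    "r3^3 + A*r3^2 + B*r3 + C = 0" and distinct: "r1 \<noteq> r2" "r1 \<noteq> r3" "r2 \<noteq> r3"
  shows "\<mu>^3 + A*\<mu>^2 + B*\<mu> + C = (\<mu> - r1)*(\<mu> - r2)*(\<mu> - r3)"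
proof -
  have "(r1 - r2)*(r1^2 + r1*r2 + r2^2 + A*(r1 + r2) + B) = 0" using assms(1,2) by algebra
  then have 12: "r1^2 + r1*r2 + r2^2 + A*(r1 + r2) + B = 0" using distinct by simp
  have "(r1 - r3)*(r1^2 + r1*r3 + r3^2 + A*(r1 + r3) + B) = 0" using assms(1,3) by algebra
  then have 13: "r1^2 + r1*r3 + r3^2 + A*(r1 + r3) + B = 0" using distinct by simp
  have "(r2 - r3)*(r1 + r2 + r3 + A) = 0" using 12 13 by algebra
  then have A: "A = -(r1 + r2 + r3)" using distinct by simp
  then have B: "B = r1*r2 + r1*r3 + r2*r3" using 12 by algebra
  then have "C = -(r1*r2*r3)" using assms(1) A by algebra
  with A B show ?thesis by algebra
qed

lemma eigs3_eqI:
  assumes "r1 < r2" "r2 < r3" and "\<And>\<mu>. det (\<mu> *\<^sub>R mat 1 - M) = (\<mu> - r1)*(\<mu> - r2)*(\<mu> - r3)"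
  shows "eigs3 M = (r1, r2, r3)"
  unfolding eigs3_def
proof (rule the_equality)
  fix e :: "real \<times> real \<times> real"
  obtain l1 l2 l3 where e: "e = (l1, l2, l3)" by (cases e) auto
  assume "case e of (l1, l2, l3) \<Rightarrow> l1 \<le> l2 \<and> l2 \<le> l3 \<and>
     (\<forall>\<mu>. det (\<mu> *\<^sub>R mat 1 - M) = (\<mu> - l1) * (\<mu> - l2) * (\<mu> - l3))"
  then have ordered: "l1 \<le> l2" "l2 \<le> l3"
    and same: "\<And>\<mu>. (\<mu> - l1)*(\<mu> - l2)*(\<mu> - l3) = (\<mu> - r1)*(\<mu> - r2)*(\<mu> - r3)"
    using assms(3) by (auto simp: e)
  have same_roots: "(x = l1 \<or> x = l2 \<or> x = l3) \<longleftrightarrow> (x = r1 \<or> x = r2 \<or> x = r3)" for x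
    using same[of x] by auto
  have "l1 = r1 \<and> l2 = r2 \<and> l3 = r3"
    using same_roots[of l1] same_roots[of l2] same_roots[of l3] same_roots[of r1]
      same_roots[of r2] same_roots[of r3] ordered assms(1,2) by (smt (verit))
  then show "e = (r1, r2, r3)" using e by simp
qed (use assms in auto)

lemma small_hyperbolic_eigs3:
  assumes "small_hyperbolic a b"
  shows "\<exists>r1 r2 r3. eigs3 (Smat a b) = (r1, r2, r3) \<and>
    0 \<le> r1 \<and> r1 < a^2 \<and> a < r2 \<and> r2 < 3*a \<and> 1 < r3 \<and> r3 < 5 \<and>
    (\<forall>\<mu>. charpoly_S a b \<mu> = (\<mu> - r1)*(\<mu> - r2)*(\<mu> - r3))"
proof -
  note sign = charpoly_S_sign_changes[OF assms]
  have a: "0 < a" "a \<le> 1/100" "a^2 < a"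
    using assms by (auto simp: small_hyperbolic_def power2_eq_square)
  have cont: "isCont (charpoly_S a b) x" for x unfolding charpoly_S_def by (intro continuous_intros)
  obtain r1 where r1: "0 \<le> r1" "r1 \<le> a^2" "charpoly_S a b r1 = 0"
    using IVT[of "charpoly_S a b" 0 0 "a^2"] sign cont by force
  obtain r2 where r2: "a \<le> r2" "r2 \<le> 3*a" "charpoly_S a b r2 = 0"
    using IVT2[of "charpoly_S a b" "3*a" 0 a] sign cont a by force
  obtain r3 where r3: "1 \<le> r3" "r3 \<le> 5" "charpoly_S a b r3 = 0"
    using IVT[of "charpoly_S a b" 1 0 5] sign cont by force
  have strict: "r1 < a^2" "a < r2" "r2 < 3*a" "1 < r3" "r3 < 5"
    using r1 r2 r3 sign by (metis order_le_less less_irrefl)+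
  have "r1 < r2" "r2 < r3" using strict a by linarith+
  have monic: "charpoly_S a b x =
      x^3 + (-(3+2*a+a^2))*x^2 + (6*a+2*a^2+2*a^3-9*b^2)*x + (-(4*a^3-27*b^2))" for x
    by (simp add: charpoly_S_def algebra_simps)
  have "charpoly_S a b \<mu> = (\<mu> - r1)*(\<mu> - r2)*(\<mu> - r3)" for \<mu>
    using r1 r2 r3 \<open>r1 < r2\<close> \<open>r2 < r3\<close> unfolding monic
    by (intro monic_cubic_eq_prod_roots) auto
  with eigs3_eqI[of r1 r2 r3] \<open>r1 < r2\<close> \<open>r2 < r3\<close> det_Smat show ?thesis
    using r1 strict by auto
qed

lemma
  assumes "small_hyperbolic a b"
  shows eig_Smat_bounds: "0 \<le> eig 1 (Smat a b)" "eig 1 (Smat a b) < a^2"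
      "a < eig 2 (Smat a b)" "eig 2 (Smat a b) < 3*a" "1 < eig 3 (Smat a b)" "eig 3 (Smat a b) < 5"
    and charpoly_S_eq_prod_eig: "charpoly_S a b \<mu> = (\<Prod>k\<in>{1,2,3}. \<mu> - eig k (Smat a b))"
  using small_hyperbolic_eigs3[OF assms] by (auto simp: eig_def)

definition charpoly_S_deriv :: "real \<Rightarrow> real \<Rightarrow> real \<Rightarrow> real \<Rightarrow> real \<Rightarrow> real" where
  "charpoly_S_deriv a b a1 b1 \<mu> = - (2*a1 + 2*a*a1)*\<mu>^2 + (6*a1 + 4*a*a1 + 6*a^2*a1 - 18*b*b1)*\<mu>
     - (12*a^2*a1 - 54*b*b1)"

lemma charpoly_S_has_derivative:
  assumes "(\<alpha> has_real_derivative a1) (at x)" "(\<beta> has_real_derivative b1) (at x)"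
  shows "((\<lambda>s. charpoly_S (\<alpha> s) (\<beta> s) \<mu>) has_real_derivative
    charpoly_S_deriv (\<alpha> x) (\<beta> x) a1 b1 \<mu>) (at x)"
  unfolding charpoly_S_def
  by (rule derivative_eq_intros refl assms)+
    (simp add: charpoly_S_deriv_def algebra_simps power2_eq_square power3_eq_cube)

lemma eig_Smat_has_derivative:
  assumes \<alpha>: "(\<alpha> has_real_derivative a1) (at x)" and \<beta>: "(\<beta> has_real_derivative b1) (at x)"
    and small: "\<forall>\<^sub>F s in nhds x. small_hyperbolic (\<alpha> s) (\<beta> s)" and "k \<in> {1,2,3}"
  shows "((\<lambda>s. eig k (Smat (\<alpha> s) (\<beta> s))) has_real_derivative
    - charpoly_S_deriv (\<alpha> x) (\<beta> x) a1 b1 (eig k (Smat (\<alpha> x) (\<beta> x))) /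
      (\<Prod>j\<in>{1,2,3}-{k}. eig k (Smat (\<alpha> x) (\<beta> x)) - eig j (Smat (\<alpha> x) (\<beta> x)))) (at x)"
proof -
  define R where "R k s = eig k (Smat (\<alpha> s) (\<beta> s))" for k s
  define a0 where "a0 = \<alpha> x"
  have small_x: "small_hyperbolic a0 (\<beta> x)"
    using eventually_nhds_x_imp_x[OF small] by (simp add: a0_def)
  then have a0: "0 < a0" "a0 \<le> 1/100" by (auto simp: small_hyperbolic_def)
  have "(\<alpha> \<longlongrightarrow> a0) (nhds x)"
    using DERIV_isCont[OF \<alpha>] by (simp add: a0_def isCont_def tendsto_at_iff_tendsto_nhds)
  then have near: "\<forall>\<^sub>F s in nhds x. a0/2 < \<alpha> s \<and> \<alpha> s < 2*a0"
    using a0(1) by (intro eventually_conj order_tendstoD) auto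
  have sep: "\<forall>\<^sub>F s in nhds x. \<forall>j\<in>{1,2,3}. \<forall>k\<in>{1,2,3}. j \<noteq> k \<longrightarrow> a0/4 \<le> \<bar>R k x - R j s\<bar>"
    using small near
  proof eventually_elim
    case (elim s)
    then have "(\<alpha> s)^2 \<le> \<alpha> s / 100" "a0^2 \<le> a0 / 100"
      using a0 mult_left_mono[of "\<alpha> s" "1/100" "\<alpha> s"] mult_left_mono[of a0 "1/100" a0]
      by (auto simp: small_hyperbolic_def power2_eq_square)
    then show ?case
      using eig_Smat_bounds[OF elim(1)] eig_Smat_bounds[OF small_x] elim(2) a0
      unfolding R_def a0_def by auto
  qed
  have factor: "\<forall>\<^sub>F s in nhds x. \<forall>\<mu>. charpoly_S (\<alpha> s) (\<beta> s) \<mu> = (\<Prod>j\<in>{1,2,3}. \<mu> - R j s)"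
    using small by eventually_elim (simp add: R_def charpoly_S_eq_prod_eig del: insert_iff)
  have "((\<lambda>s. R k s) has_real_derivative
      - charpoly_S_deriv (\<alpha> x) (\<beta> x) a1 b1 (R k x) / (\<Prod>j\<in>{1,2,3}-{k}. R k x - R j x)) (at x)"
    by (rule simple_roots_has_derivative[OF _ factor charpoly_S_has_derivative[OF \<alpha> \<beta>] sep])
      (use a0(1) \<open>k \<in> {1,2,3}\<close> in auto)
  then show ?thesis unfolding R_def .
qed

lemma charpoly_S_deriv_coefficient_bounds:
  fixes \<sigma> K a b a1 b1 :: real
  assumes \<sigma>: "0 < \<sigma>" "\<sigma> \<le> 1/10" and a: "a = \<sigma>^2" and b: "\<bar>b\<bar> \<le> \<sigma>^3"
    and a1: "\<bar>a1\<bar> \<le> K*\<sigma>" and b1: "\<bar>b1\<bar> \<le> K*\<sigma>^2"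
  shows "\<bar>(2 + 2*a)*a1\<bar> \<le> 3*K*\<sigma>" "\<bar>(6 + 4*a + 6*a^2)*a1 - 18*(b*b1)\<bar> \<le> 7*K*\<sigma> + 18*K*\<sigma>^5"
    "\<bar>12*(a^2*a1) - 54*(b*b1)\<bar> \<le> 66*K*\<sigma>^5"
proof -
  have K: "0 \<le> K" using a1 \<sigma> by (smt (verit) zero_le_mult_iff)
  have "\<sigma>^2 \<le> (1/10)^2" by (rule power_mono) (use \<sigma> in auto)
  then have a_le: "0 \<le> a" "a \<le> 1/100" "a^2 \<le> a"
    using a \<sigma> by (auto simp: power2_eq_square mult_left_le_one_le)
  show "\<bar>(2 + 2*a)*a1\<bar> \<le> 3*K*\<sigma>"
    using mult_mono[OF _ a1, of "2 + 2*a" 3] a_le K \<sigma> by (simp add: abs_mult)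
  have c1: "\<bar>(6 + 4*a + 6*a^2)*a1\<bar> \<le> 7*K*\<sigma>"
    using mult_mono[OF _ a1, of "6 + 4*a + 6*a^2" 7] a_le K \<sigma> by (simp add: abs_mult)
  have "\<bar>b*b1\<bar> \<le> \<sigma>^3 * (K*\<sigma>^2)" using mult_mono[OF b b1] \<sigma> by (simp add: abs_mult)
  then have bb: "\<bar>b*b1\<bar> \<le> K*\<sigma>^5" by (simp add: algebra_simps flip: power_add)
  have "\<bar>a^2*a1\<bar> \<le> \<sigma>^4 * (K*\<sigma>)"
    using mult_mono[OF _ a1, of "a^2" "\<sigma>^4"] a \<sigma> by (simp add: abs_mult flip: power_mult)
  then have aa: "\<bar>a^2*a1\<bar> \<le> K*\<sigma>^5" by (simp add: algebra_simps flip: power_Suc)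
  show "\<bar>(6 + 4*a + 6*a^2)*a1 - 18*(b*b1)\<bar> \<le> 7*K*\<sigma> + 18*K*\<sigma>^5"
    using abs_triangle_ineq4[of "(6 + 4*a + 6*a^2)*a1" "18*(b*b1)"] c1 bb by simp
  show "\<bar>12*(a^2*a1) - 54*(b*b1)\<bar> \<le> 66*K*\<sigma>^5"
    using abs_triangle_ineq4[of "12*(a^2*a1)" "54*(b*b1)"] aa bb by simp
qed

lemma charpoly_S_deriv_abs_le:
  fixes \<sigma> K a b a1 b1 \<mu> \<rho> :: real
  assumes \<sigma>: "0 < \<sigma>" "\<sigma> \<le> 1/10" and a: "a = \<sigma>^2" and b: "\<bar>b\<bar> \<le> \<sigma>^3"
    and a1: "\<bar>a1\<bar> \<le> K*\<sigma>" and b1: "\<bar>b1\<bar> \<le> K*\<sigma>^2" and \<mu>: "\<bar>\<mu>\<bar> \<le> \<rho>"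
  shows "\<bar>charpoly_S_deriv a b a1 b1 \<mu>\<bar> \<le> 3*K*\<sigma>*\<rho>^2 + (7*K*\<sigma> + 18*K*\<sigma>^5)*\<rho> + 66*K*\<sigma>^5"
proof -
  note coeff = charpoly_S_deriv_coefficient_bounds[OF \<sigma> a b a1 b1]
  have K: "0 \<le> K" using a1 \<sigma> by (smt (verit) zero_le_mult_iff)
  have expand: "charpoly_S_deriv a b a1 b1 \<mu> = - ((2 + 2*a)*a1*\<mu>^2)
      + ((6 + 4*a + 6*a^2)*a1 - 18*(b*b1))*\<mu> - (12*(a^2*a1) - 54*(b*b1))"
    by (simp add: charpoly_S_deriv_def algebra_simps)
  have "\<bar>charpoly_S_deriv a b a1 b1 \<mu>\<bar> \<le> \<bar>(2 + 2*a)*a1\<bar>*\<mu>^2 + \<bar>(6 + 4*a + 6*a^2)*a1 - 18*(b*b1)\<bar>*\<bar>\<mu>\<bar>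
      + \<bar>12*(a^2*a1) - 54*(b*b1)\<bar>"
  proof -
    have "\<bar>((2 + 2*a)*a1)*\<mu>^2\<bar> = \<bar>(2 + 2*a)*a1\<bar>*\<mu>^2"
      "\<bar>((6 + 4*a + 6*a^2)*a1 - 18*(b*b1))*\<mu>\<bar> = \<bar>(6 + 4*a + 6*a^2)*a1 - 18*(b*b1)\<bar>*\<bar>\<mu>\<bar>"
      by (simp_all add: abs_mult)
    moreover have "\<bar>- x + y - z\<bar> \<le> \<bar>x\<bar> + \<bar>y\<bar> + \<bar>z\<bar>" for x y z :: real by arith
    ultimately show ?thesis unfolding expand by metis
  qed
  also have "\<dots> \<le> 3*K*\<sigma>*\<rho>^2 + (7*K*\<sigma> + 18*K*\<sigma>^5)*\<rho> + 66*K*\<sigma>^5"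
  proof -
    have "\<mu>^2 \<le> \<rho>^2" using power_mono[OF \<mu>, of 2] by simp
    then have "\<bar>(2 + 2*a)*a1\<bar>*\<mu>^2 \<le> 3*K*\<sigma>*\<rho>^2"
      by (rule mult_mono[OF coeff(1)]) (use K \<sigma> in auto)
    moreover have "\<bar>(6 + 4*a + 6*a^2)*a1 - 18*(b*b1)\<bar>*\<bar>\<mu>\<bar> \<le> (7*K*\<sigma> + 18*K*\<sigma>^5)*\<rho>"
      by (rule mult_mono[OF coeff(2) \<mu>]) (use K \<sigma> in auto)
    ultimately show ?thesis using coeff(3) by linarith
  qed
  finally show ?thesis .
qed

lemma root_velocity_bounds:
  fixes \<sigma> K a b a1 b1 r1 r2 r3 :: real
  assumes \<sigma>: "0 < \<sigma>" "\<sigma> \<le> 1/10" and a: "a = \<sigma>^2" and b: "\<bar>b\<bar> \<le> \<sigma>^3"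
    and a1: "\<bar>a1\<bar> \<le> K*\<sigma>" and b1: "\<bar>b1\<bar> \<le> K*\<sigma>^2"
    and r: "0 \<le> r1" "r1 < a^2" "a < r2" "r2 < 3*a" "1 < r3" "r3 < 5"
  shows "\<bar>- charpoly_S_deriv a b a1 b1 r1 / ((r1 - r2)*(r1 - r3))\<bar> \<le> 1100*K*\<sigma>^3"
    "\<bar>- charpoly_S_deriv a b a1 b1 r2 / ((r2 - r1)*(r2 - r3))\<bar> \<le> 1100*K*\<sigma>"
    "\<bar>- charpoly_S_deriv a b a1 b1 r3 / ((r3 - r1)*(r3 - r2))\<bar> \<le> 1100*K*\<sigma>"
proof -
  note P_le = charpoly_S_deriv_abs_le[OF \<sigma> a b a1 b1]
  have K: "0 \<le> K" using a1 \<sigma> by (smt (verit) zero_le_mult_iff)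
  have pw: "K*\<sigma>^m \<le> K*\<sigma>^n" if "n \<le> m" for m n :: nat
    using power_decreasing[OF that, of \<sigma>] \<sigma> K by (simp add: mult_left_mono)
  have "\<sigma>^2 \<le> (1/10)^2" by (rule power_mono) (use \<sigma> in auto)
  then have \<sigma>2: "0 < \<sigma>^2" "\<sigma>^2 \<le> 1/100" "a^2 \<le> \<sigma>^2/100"
    using a \<sigma> mult_left_mono[of "\<sigma>^2" "1/100" "\<sigma>^2"] by (auto simp: power2_eq_square)
  have "\<bar>charpoly_S_deriv a b a1 b1 r1\<bar> \<le> 1100*K*\<sigma>^3 * (\<sigma>^2/2 * (1/2))"
  proof -
    have r_le: "\<bar>r1\<bar> \<le> \<sigma>^4" using r a by (simp flip: power_mult)
    have "3*K*\<sigma>*(\<sigma>^4)^2 + (7*K*\<sigma> + 18*K*\<sigma>^5)*\<sigma>^4 + 66*K*\<sigma>^5 = 21*(K*\<sigma>^9) + 73*(K*\<sigma>^5)"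
      by algebra
    moreover have "1100*K*\<sigma>^3 * (\<sigma>^2/2 * (1/2)) = 275*(K*\<sigma>^5)" by (simp add: field_simps flip: power_add)
    ultimately show ?thesis using P_le[OF r_le] pw[of 5 9] by linarith
  qed
  then show "\<bar>- charpoly_S_deriv a b a1 b1 r1 / ((r1 - r2)*(r1 - r3))\<bar> \<le> 1100*K*\<sigma>^3"
    by (rule abs_minus_divide_mult_le) (use r a \<sigma>2 in auto)
  have "\<bar>charpoly_S_deriv a b a1 b1 r2\<bar> \<le> 1100*K*\<sigma> * (\<sigma>^2/2 * (1/2))"
  proof -
    have r_le: "\<bar>r2\<bar> \<le> 3*\<sigma>^2" using r a \<sigma> by simp
    have "3*K*\<sigma>*(3*\<sigma>^2)^2 + (7*K*\<sigma> + 18*K*\<sigma>^5)*(3*\<sigma>^2) + 66*K*\<sigma>^5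
        = 21*(K*\<sigma>^3) + 93*(K*\<sigma>^5) + 54*(K*\<sigma>^7)" by algebra
    moreover have "1100*K*\<sigma> * (\<sigma>^2/2 * (1/2)) = 275*(K*\<sigma>^3)"
      by (simp add: field_simps flip: power_add power_Suc)
    ultimately show ?thesis using P_le[OF r_le] pw[of 3 5] pw[of 3 7] by linarith
  qed
  then show "\<bar>- charpoly_S_deriv a b a1 b1 r2 / ((r2 - r1)*(r2 - r3))\<bar> \<le> 1100*K*\<sigma>"
    by (rule abs_minus_divide_mult_le) (use r a \<sigma>2 in auto)
  have "\<bar>charpoly_S_deriv a b a1 b1 r3\<bar> \<le> 1100*K*\<sigma> * (1/2 * (1/2))"
  proof -
    have r_le: "\<bar>r3\<bar> \<le> 5" using r by simp
    have "3*K*\<sigma>*5^2 + (7*K*\<sigma> + 18*K*\<sigma>^5)*5 + 66*K*\<sigma>^5 = 110*(K*\<sigma>^1) + 156*(K*\<sigma>^5)"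
      by algebra
    moreover have "1100*K*\<sigma> * (1/2 * (1/2)) = 275*(K*\<sigma>^1)" by simp
    ultimately show ?thesis using P_le[OF r_le] pw[of 1 5] by linarith
  qed
  then show "\<bar>- charpoly_S_deriv a b a1 b1 r3 / ((r3 - r1)*(r3 - r2))\<bar> \<le> 1100*K*\<sigma>"
    by (rule abs_minus_divide_mult_le) (use r a \<sigma>2 in auto)
qed

lemma hyperbolic_pair_sqrt_scale_bounds:
  fixes Ga Gb :: "nat \<Rightarrow> real \<Rightarrow> real"
  assumes "0 < \<sigma>"
    and tower_a: "\<And>m s. m < 2 \<Longrightarrow> \<bar>s\<bar> \<le> \<sigma> \<Longrightarrow> DERIV (Ga m) s :> Ga (Suc m) s"
    and tower_b: "\<And>m s. m < 3 \<Longrightarrow> \<bar>s\<bar> \<le> \<sigma> \<Longrightarrow> DERIV (Gb m) s :> Gb (Suc m) s"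
    and M2: "\<And>s. \<bar>s\<bar> \<le> \<sigma> \<Longrightarrow> \<bar>Ga 2 s\<bar> \<le> M2"
    and N3: "\<And>s. \<bar>s\<bar> \<le> \<sigma> \<Longrightarrow> \<bar>Gb 3 s\<bar> \<le> N3"
    and hyperbolic: "\<And>s. \<bar>s\<bar> \<le> \<sigma> \<Longrightarrow> 0 \<le> Ga 0 s \<and> 27*(Gb 0 s)^2 \<le> 4*(Ga 0 s)^3"
    and "Ga 0 0 = \<sigma>^2"
  shows "\<bar>Ga 1 0\<bar> \<le> (2*(2 + M2)^2 + N3) * \<sigma>" "\<bar>Gb 1 0\<bar> \<le> (2*(2 + M2)^2 + N3) * \<sigma>^2"
    "\<bar>Gb 0 0\<bar> \<le> \<sigma>^3"
proof -
  have M2_N3: "0 \<le> M2" "0 \<le> N3" using M2[of 0] N3[of 0] \<open>0 < \<sigma>\<close> by auto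
  have "2 + M2 \<le> (2 + M2)^2" using M2_N3 by (simp add: power2_eq_square)
  then have K: "1 + M2/2 \<le> 2*(2 + M2)^2 + N3" "(2 + M2)^2 + N3/6 \<le> 2*(2 + M2)^2 + N3"
    using M2_N3 by auto
  have "0 \<le> Ga 0 s" if "\<bar>s\<bar> \<le> \<sigma>" for s using hyperbolic[OF that] by blast
  note a_bounds = nonneg_function_sqrt_scale_bounds[OF tower_a M2 this \<open>Ga 0 0 = \<sigma>^2\<close> \<open>0 < \<sigma>\<close>]
  have "\<bar>Ga 1 0\<bar> \<le> (1 + M2/2) * \<sigma>" by (rule a_bounds(1))
  also have "\<dots> \<le> (2*(2 + M2)^2 + N3) * \<sigma>" using K \<open>0 < \<sigma>\<close> by (intro mult_right_mono) auto
  finally show "\<bar>Ga 1 0\<bar> \<le> (2*(2 + M2)^2 + N3) * \<sigma>" .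
  have b_pm: "\<bar>Gb 0 x\<bar> \<le> (2 + M2)^2 * \<sigma>^3" if "\<bar>x\<bar> \<le> \<sigma>" for x
    using hyperbolic[OF that] a_bounds(2) that M2_N3 \<open>0 < \<sigma>\<close>
    by (intro abs_le_of_cubic_discriminant) auto
  have "2 * \<bar>Gb 1 0\<bar> * \<sigma> \<le> \<bar>Gb 0 \<sigma>\<bar> + \<bar>Gb 0 (-\<sigma>)\<bar> + N3 * \<sigma>^3 / 3"
    by (rule deriv_bound_by_third_deriv[OF tower_b N3 \<open>0 < \<sigma>\<close>])
  also have "\<dots> \<le> 2 * (((2 + M2)^2 + N3/6) * \<sigma>^2) * \<sigma>"
    using b_pm[of \<sigma>] b_pm[of "-\<sigma>"] \<open>0 < \<sigma>\<close> by (simp add: algebra_simps power2_eq_square power3_eq_cube)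
  finally have "\<bar>Gb 1 0\<bar> \<le> ((2 + M2)^2 + N3/6) * \<sigma>^2" using \<open>0 < \<sigma>\<close> by simp
  also have "\<dots> \<le> (2*(2 + M2)^2 + N3) * \<sigma>^2" using K by (intro mult_right_mono) auto
  finally show "\<bar>Gb 1 0\<bar> \<le> (2*(2 + M2)^2 + N3) * \<sigma>^2" .
  show "\<bar>Gb 0 0\<bar> \<le> \<sigma>^3"
    using abs_le_of_cubic_discriminant[of "Gb 0 0" "Ga 0 0" 1 \<sigma>] hyperbolic[of 0] \<open>Ga 0 0 = \<sigma>^2\<close> \<open>0 < \<sigma>\<close>
    by simp
qed

lemma eig_Smat_derivative_bounds_at:
  assumes \<alpha>: "(\<alpha> has_real_derivative a1) (at x)" and \<beta>: "(\<beta> has_real_derivative b1) (at x)"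
    and small: "\<forall>\<^sub>F s in nhds x. small_hyperbolic (\<alpha> s) (\<beta> s)"
    and \<sigma>: "0 < \<sigma>" "\<sigma> \<le> 1/10" "\<alpha> x = \<sigma>^2" "\<bar>\<beta> x\<bar> \<le> \<sigma>^3"
    and a1: "\<bar>a1\<bar> \<le> K*\<sigma>" and b1: "\<bar>b1\<bar> \<le> K*\<sigma>^2"
  shows "\<exists>D1 D2 D3.
    ((\<lambda>s. eig 1 (Smat (\<alpha> s) (\<beta> s))) has_real_derivative D1) (at x) \<and>
    ((\<lambda>s. eig 2 (Smat (\<alpha> s) (\<beta> s))) has_real_derivative D2) (at x) \<and>
    ((\<lambda>s. eig 3 (Smat (\<alpha> s) (\<beta> s))) has_real_derivative D3) (at x) \<and>
    \<bar>D1\<bar> \<le> 1100*K*\<sigma>^3 \<and> \<bar>D2\<bar> \<le> 1100*K*\<sigma> \<and> \<bar>D3\<bar> \<le> 1100*K*\<sigma>"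
proof -
  define e where "e k = eig k (Smat (\<alpha> x) (\<beta> x))" for k
  define P where "P = charpoly_S_deriv (\<alpha> x) (\<beta> x) a1 b1"
  have "small_hyperbolic (\<alpha> x) (\<beta> x)" using small by (rule eventually_nhds_x_imp_x)
  note bounds = root_velocity_bounds[OF \<sigma> a1 b1 eig_Smat_bounds[OF this], folded e_def P_def]
  note deriv = eig_Smat_has_derivative[OF \<alpha> \<beta> small, folded e_def P_def]
  have "{1,2,3::nat} - {1} = {2,3}" "{1,2,3::nat} - {2} = {1,3}" "{1,2,3::nat} - {3} = {1,2}" by auto
  then have "((\<lambda>s. eig 1 (Smat (\<alpha> s) (\<beta> s))) has_real_derivative - P (e 1) / ((e 1 - e 2)*(e 1 - e 3))) (at x)"
    "((\<lambda>s. eig 2 (Smat (\<alpha> s) (\<beta> s))) has_real_derivative - P (e 2) / ((e 2 - e 1)*(e 2 - e 3))) (at x)"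
    "((\<lambda>s. eig 3 (Smat (\<alpha> s) (\<beta> s))) has_real_derivative - P (e 3) / ((e 3 - e 1)*(e 3 - e 2))) (at x)"
    using deriv[of 1] deriv[of 2] deriv[of 3] by simp_all
  with bounds show ?thesis by blast
qed

section \<open>Coordinate lines through a point\<close>

lemma has_real_derivative_along_line:
  assumes "(f has_derivative f') (at (p + s *\<^sub>R v))"
  shows "((\<lambda>s. f (p + s *\<^sub>R v)) has_real_derivative f' v) (at s)"
proof -
  have "((\<lambda>s. p + s *\<^sub>R v) has_derivative (\<lambda>h. h *\<^sub>R v)) (at s)"
    by (auto intro!: derivative_eq_intros)
  then have "((\<lambda>s. f (p + s *\<^sub>R v)) has_derivative (\<lambda>h. f' (h *\<^sub>R v))) (at s)"
    using assms by (rule has_derivative_compose)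
  moreover have "f' (h *\<^sub>R v) = f' v * h" for h
    using linear_scale[OF has_derivative_linear[OF assms]] by simp
  ultimately show ?thesis by (simp add: has_field_derivative_def mult_commute_abs)
qed

lemma smooth_bdd_on_imp_continuous_on:
  assumes "smooth_bdd_on S g"
  shows "continuous_on S g"
proof -
  obtain Dg where Dg0: "\<forall>x\<in>S. Dg [] x = g x"
    and deriv: "\<forall>x\<in>S. (Dg [] has_derivative (\<lambda>h. Dg [h] x)) (at x)"
    using assms unfolding smooth_bdd_on_def by blast
  have "continuous_on S (Dg [])"
    using has_derivative_continuous[OF deriv[rule_format]] by (simp add: continuous_at_imp_continuous_on)
  then show ?thesis by (rule continuous_on_eq) (use Dg0 in simp)
qed

lemma smooth_bdd_on_directional_derivatives:
  fixes g :: "'a::euclidean_space \<Rightarrow> real"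
  assumes "smooth_bdd_on S g"
  obtains G :: "nat \<Rightarrow> 'a \<Rightarrow> 'a \<Rightarrow> real" where "\<And>v x. x \<in> S \<Longrightarrow> G 0 v x = g x"
    and "\<And>m v p s. p + s *\<^sub>R v \<in> S \<Longrightarrow>
      ((\<lambda>s. G m v (p + s *\<^sub>R v)) has_real_derivative G (Suc m) v (p + s *\<^sub>R v)) (at s)"
    and "\<And>m. \<exists>M\<ge>0. \<forall>v\<in>Basis. \<forall>x\<in>S. \<bar>G m v x\<bar> \<le> M"
proof -
  obtain Dg :: "'a list \<Rightarrow> 'a \<Rightarrow> real" where Dg0: "\<forall>x\<in>S. Dg [] x = g x"
    and deriv: "\<forall>vs. \<forall>x\<in>S. (Dg vs has_derivative (\<lambda>h. Dg (h # vs) x)) (at x)"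
    and bounded: "\<forall>vs. set vs \<subseteq> Basis \<longrightarrow> bounded (Dg vs ` S)"
    using assms unfolding smooth_bdd_on_def by blast
  define G where "G m v = Dg (replicate m v)" for m v
  have "G 0 v x = g x" if "x \<in> S" for v x using Dg0 that by (simp add: G_def)
  moreover have "((\<lambda>s. G m v (p + s *\<^sub>R v)) has_real_derivative G (Suc m) v (p + s *\<^sub>R v)) (at s)"
    if "p + s *\<^sub>R v \<in> S" for m v p s
    using has_real_derivative_along_line[OF deriv[rule_format, OF that]] by (simp add: G_def)
  moreover have "\<exists>M\<ge>0. \<forall>v\<in>Basis. \<forall>x\<in>S. \<bar>G m v x\<bar> \<le> M" for m
  proof -
    have "bounded (\<Union>v\<in>Basis. G m v ` S)"
      unfolding G_def using bounded by (intro bounded_UN) (auto simp: set_replicate_conv_if)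
    then obtain B where "0 < B" "\<forall>y\<in>(\<Union>v\<in>Basis. G m v ` S). \<bar>y\<bar> \<le> B"
      unfolding bounded_pos by auto
    then show ?thesis by (intro exI[of _ B]) auto
  qed
  ultimately show ?thesis by (rule that)
qed

definition eig_derivative_bounds :: "real \<Rightarrow> (real \<Rightarrow> real) \<Rightarrow> (real \<Rightarrow> real) \<Rightarrow> bool" where
  "eig_derivative_bounds C \<alpha> \<beta> \<longleftrightarrow> (\<exists>D1 D2 D3.
     ((\<lambda>s. eig 1 (Smat (\<alpha> s) (\<beta> s))) has_real_derivative D1) (at 0) \<and>
     ((\<lambda>s. eig 2 (Smat (\<alpha> s) (\<beta> s))) has_real_derivative D2) (at 0) \<and>
     ((\<lambda>s. eig 3 (Smat (\<alpha> s) (\<beta> s))) has_real_derivative D3) (at 0) \<and>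
     \<bar>D1\<bar> \<le> C * \<alpha> 0 powr (3/2) \<and> \<bar>D2\<bar> \<le> C * sqrt (\<alpha> 0) \<and> \<bar>D3\<bar> \<le> C * sqrt (\<alpha> 0))"

lemma eig_derivative_bounds_of_derivative_towers:
  fixes \<alpha> \<beta> :: "real \<Rightarrow> real" and Ga Gb :: "nat \<Rightarrow> real \<Rightarrow> real"
  assumes "0 < \<rho>"
    and tower_a: "\<And>m s. \<bar>s\<bar> \<le> \<rho> \<Longrightarrow> DERIV (Ga m) s :> Ga (Suc m) s"
    and tower_b: "\<And>m s. \<bar>s\<bar> \<le> \<rho> \<Longrightarrow> DERIV (Gb m) s :> Gb (Suc m) s"
    and M2: "\<And>s. \<bar>s\<bar> \<le> \<rho> \<Longrightarrow> \<bar>Ga 2 s\<bar> \<le> M2"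
    and N3: "\<And>s. \<bar>s\<bar> \<le> \<rho> \<Longrightarrow> \<bar>Gb 3 s\<bar> \<le> N3"
    and \<alpha>: "\<And>s. \<bar>s\<bar> \<le> \<rho> \<Longrightarrow> Ga 0 s = \<alpha> s" and \<beta>: "\<And>s. \<bar>s\<bar> \<le> \<rho> \<Longrightarrow> Gb 0 s = \<beta> s"
    and hyperbolic: "\<And>s. \<bar>s\<bar> \<le> \<rho> \<Longrightarrow> 0 < \<alpha> s \<and> 27*(\<beta> s)^2 \<le> 4*(\<alpha> s)^3"
    and small: "\<alpha> 0 < \<rho>^2" "\<alpha> 0 < 1/100"
  shows "eig_derivative_bounds (1100 * (2*(2 + M2)^2 + N3)) \<alpha> \<beta>"
proof -
  define \<sigma> where "\<sigma> = sqrt (\<alpha> 0)"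
  have "0 < \<alpha> 0" using hyperbolic[of 0] \<open>0 < \<rho>\<close> by simp
  then have \<sigma>: "0 < \<sigma>" "\<sigma> < \<rho>" "\<sigma> \<le> 1/10" "\<alpha> 0 = \<sigma>^2"
    using small \<open>0 < \<rho>\<close> real_sqrt_less_mono[of "\<alpha> 0" "1/100"] real_sqrt_less_mono[of "\<alpha> 0" "\<rho>^2"]
    by (auto simp: \<sigma>_def real_sqrt_divide)
  have near: "\<forall>\<^sub>F s in nhds 0. \<bar>s\<bar> < \<rho>"
    using eventually_nhds_ball[OF \<open>0 < \<rho>\<close>, of 0] by (rule eventually_mono) (simp add: dist_real_def)
  have "\<forall>\<^sub>F s in nhds 0. Ga 0 s = \<alpha> s" "\<forall>\<^sub>F s in nhds 0. Gb 0 s = \<beta> s"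
    using near by (auto elim!: eventually_mono simp: \<alpha> \<beta>)
  then have derivs: "(\<alpha> has_real_derivative Ga 1 0) (at 0)" "(\<beta> has_real_derivative Gb 1 0) (at 0)"
    using tower_a[of 0 0] tower_b[of 0 0] \<open>0 < \<rho>\<close> DERIV_cong_ev[OF refl _ refl] by auto
  have "(\<alpha> \<longlongrightarrow> \<alpha> 0) (nhds 0)"
    using DERIV_isCont[OF derivs(1)] by (simp add: isCont_def tendsto_at_iff_tendsto_nhds)
  then have "\<forall>\<^sub>F s in nhds 0. \<alpha> s < 1/100" using small(2) by (rule order_tendstoD)
  with near have small_near: "\<forall>\<^sub>F s in nhds 0. small_hyperbolic (\<alpha> s) (\<beta> s)"
    by eventually_elim (use hyperbolic in \<open>auto simp: small_hyperbolic_def\<close>)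
  have in_\<rho>: "\<bar>s\<bar> \<le> \<rho>" if "\<bar>s\<bar> \<le> \<sigma>" for s using that \<sigma>(2) by simp
  have "0 \<le> Ga 0 s \<and> 27*(Gb 0 s)^2 \<le> 4*(Ga 0 s)^3" if "\<bar>s\<bar> \<le> \<sigma>" for s
    using hyperbolic[OF in_\<rho>[OF that]] \<alpha>[OF in_\<rho>[OF that]] \<beta>[OF in_\<rho>[OF that]] by simp
  moreover have "Ga 0 0 = \<sigma>^2" using \<alpha>[of 0] \<sigma>(4) \<open>0 < \<rho>\<close> by simp
  moreover have "\<And>m s. m < 2 \<Longrightarrow> \<bar>s\<bar> \<le> \<sigma> \<Longrightarrow> DERIV (Ga m) s :> Ga (Suc m) s"
    "\<And>m s. m < 3 \<Longrightarrow> \<bar>s\<bar> \<le> \<sigma> \<Longrightarrow> DERIV (Gb m) s :> Gb (Suc m) s"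
    "\<And>s. \<bar>s\<bar> \<le> \<sigma> \<Longrightarrow> \<bar>Ga 2 s\<bar> \<le> M2" "\<And>s. \<bar>s\<bar> \<le> \<sigma> \<Longrightarrow> \<bar>Gb 3 s\<bar> \<le> N3"
    using tower_a tower_b M2 N3 in_\<rho> by blast+
  ultimately have scale: "\<bar>Ga 1 0\<bar> \<le> (2*(2 + M2)^2 + N3) * \<sigma>"
    "\<bar>Gb 1 0\<bar> \<le> (2*(2 + M2)^2 + N3) * \<sigma>^2" "\<bar>Gb 0 0\<bar> \<le> \<sigma>^3"
    using hyperbolic_pair_sqrt_scale_bounds[OF \<sigma>(1)] by blast+
  have "\<alpha> 0 powr (3/2) = (\<alpha> 0 powr (1/2)) powr 3" by (simp add: powr_powr)
  also have "\<dots> = \<sigma>^3" using \<open>0 < \<alpha> 0\<close> \<sigma>(1) by (simp add: powr_half_sqrt \<sigma>_def powr_realpow)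
  finally have "\<alpha> 0 powr (3/2) = \<sigma>^3" .
  moreover have "\<bar>\<beta> 0\<bar> \<le> \<sigma>^3" using scale(3) \<beta>[of 0] \<open>0 < \<rho>\<close> by simp
  note eig_Smat_derivative_bounds_at[OF derivs small_near \<sigma>(1,3,4) this scale(1,2)]
  ultimately show ?thesis unfolding eig_derivative_bounds_def \<sigma>_def[symmetric] by simp
qed

definition hyperbolic_segment ::
    "(real \<times> (real^'n)) set \<Rightarrow> (real \<Rightarrow> real^'n \<Rightarrow> real) \<Rightarrow> (real \<Rightarrow> real^'n \<Rightarrow> real) \<Rightarrow>
     real \<Rightarrow> real^'n \<Rightarrow> 'n \<Rightarrow> real \<Rightarrow> bool" where
  "hyperbolic_segment S a b t X i \<rho> \<longleftrightarrow> (\<forall>s. \<bar>s\<bar> \<le> \<rho> \<longrightarrow>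
     (t, X + s *\<^sub>R axis i 1) \<in> S \<and> 0 < a t (X + s *\<^sub>R axis i 1) \<and>
     27*(b t (X + s *\<^sub>R axis i 1))^2 \<le> 4*(a t (X + s *\<^sub>R axis i 1))^3)"

lemma eig_derivative_bounds_on_coordinate_line:
  fixes a b :: "real \<Rightarrow> real^'n \<Rightarrow> real"
    and Ga Gb :: "nat \<Rightarrow> real \<times> (real^'n) \<Rightarrow> real \<times> (real^'n) \<Rightarrow> real"
  assumes a_eq: "\<And>v p. p \<in> S \<Longrightarrow> Ga 0 v p = a (fst p) (snd p)"
    and b_eq: "\<And>v p. p \<in> S \<Longrightarrow> Gb 0 v p = b (fst p) (snd p)"
    and a_deriv: "\<And>m v p s. p + s *\<^sub>R v \<in> S \<Longrightarrow>
      ((\<lambda>s. Ga m v (p + s *\<^sub>R v)) has_real_derivative Ga (Suc m) v (p + s *\<^sub>R v)) (at s)"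
    and b_deriv: "\<And>m v p s. p + s *\<^sub>R v \<in> S \<Longrightarrow>
      ((\<lambda>s. Gb m v (p + s *\<^sub>R v)) has_real_derivative Gb (Suc m) v (p + s *\<^sub>R v)) (at s)"
    and M2: "\<forall>v\<in>Basis. \<forall>x\<in>S. \<bar>Ga 2 v x\<bar> \<le> M2" and N3: "\<forall>v\<in>Basis. \<forall>x\<in>S. \<bar>Gb 3 v x\<bar> \<le> N3"
    and "0 < \<rho>" and small: "a t X < \<rho>^2" "a t X < 1/100"
    and segment: "hyperbolic_segment S a b t X i \<rho>"
  shows "eig_derivative_bounds (1100 * (2*(2 + M2)^2 + N3))
    (\<lambda>s. a t (X + s *\<^sub>R axis i 1)) (\<lambda>s. b t (X + s *\<^sub>R axis i 1))"
proof -
  define v :: "real \<times> (real^'n)" where "v = (0, axis i 1)"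
  have line: "(t, X) + s *\<^sub>R v = (t, X + s *\<^sub>R axis i 1)" for s by (simp add: v_def)
  have "v \<in> Basis" by (simp add: v_def Basis_prod_def)
  show ?thesis
  proof (rule eig_derivative_bounds_of_derivative_towers[where Ga = "\<lambda>m s. Ga m v ((t, X) + s *\<^sub>R v)"
        and Gb = "\<lambda>m s. Gb m v ((t, X) + s *\<^sub>R v)", OF \<open>0 < \<rho>\<close>])
    fix m :: nat and s :: real
    assume "\<bar>s\<bar> \<le> \<rho>"
    then have "(t, X) + s *\<^sub>R v \<in> S" using segment by (simp add: hyperbolic_segment_def line)
    then show "DERIV (\<lambda>s. Ga m v ((t, X) + s *\<^sub>R v)) s :> Ga (Suc m) v ((t, X) + s *\<^sub>R v)"
      "DERIV (\<lambda>s. Gb m v ((t, X) + s *\<^sub>R v)) s :> Gb (Suc m) v ((t, X) + s *\<^sub>R v)"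
      by (rule a_deriv, rule b_deriv)
  qed (use M2 N3 \<open>v \<in> Basis\<close> a_eq b_eq segment small in \<open>auto simp: hyperbolic_segment_def line\<close>)
qed

lemma eig_derivative_bounds_on_coordinate_lines:
  fixes a b :: "real \<Rightarrow> real^'n \<Rightarrow> real"
  assumes "smooth_bdd_on S (\<lambda>p. a (fst p) (snd p))" "smooth_bdd_on S (\<lambda>p. b (fst p) (snd p))"
  obtains C where "0 < C"
    and "\<And>t X i \<rho>. 0 < \<rho> \<Longrightarrow> a t X < \<rho>^2 \<Longrightarrow> a t X < 1/100 \<Longrightarrow>
      hyperbolic_segment S a b t X i \<rho> \<Longrightarrow>
      eig_derivative_bounds C (\<lambda>s. a t (X + s *\<^sub>R axis i 1)) (\<lambda>s. b t (X + s *\<^sub>R axis i 1))"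
proof -
  obtain Ga where "\<And>v p. p \<in> S \<Longrightarrow> Ga 0 v p = a (fst p) (snd p)"
    and "\<And>m v p s. p + s *\<^sub>R v \<in> S \<Longrightarrow>
      ((\<lambda>s. Ga m v (p + s *\<^sub>R v)) has_real_derivative Ga (Suc m) v (p + s *\<^sub>R v)) (at s)"
    and a_bdd: "\<And>m. \<exists>M\<ge>0. \<forall>v\<in>Basis. \<forall>x\<in>S. \<bar>Ga m v x\<bar> \<le> M"
    using smooth_bdd_on_directional_derivatives[OF assms(1)] by blast
  moreover obtain Gb where "\<And>v p. p \<in> S \<Longrightarrow> Gb 0 v p = b (fst p) (snd p)"
    and "\<And>m v p s. p + s *\<^sub>R v \<in> S \<Longrightarrow>
      ((\<lambda>s. Gb m v (p + s *\<^sub>R v)) has_real_derivative Gb (Suc m) v (p + s *\<^sub>R v)) (at s)"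
    and b_bdd: "\<And>m. \<exists>M\<ge>0. \<forall>v\<in>Basis. \<forall>x\<in>S. \<bar>Gb m v x\<bar> \<le> M"
    using smooth_bdd_on_directional_derivatives[OF assms(2)] by blast
  moreover obtain M2 N3 where "0 \<le> M2" "0 \<le> N3" and "\<forall>v\<in>Basis. \<forall>x\<in>S. \<bar>Ga 2 v x\<bar> \<le> M2"
    and "\<forall>v\<in>Basis. \<forall>x\<in>S. \<bar>Gb 3 v x\<bar> \<le> N3"
    using a_bdd b_bdd by metis
  ultimately show ?thesis
    using eig_derivative_bounds_on_coordinate_line[of S Ga a Gb b]
    by (intro that[of "1100 * (2*(2 + M2)^2 + N3)"]) (auto simp: add_pos_nonneg)
qed

lemma dist_add_scaleR_axis_le:
  fixes x y :: "real^'n"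
  shows "dist x (y + s *\<^sub>R axis i 1) \<le> dist x y + \<bar>s\<bar>"
  using dist_triangle[of x "y + s *\<^sub>R axis i 1" y] by (simp add: dist_norm)

theorem lemma2p2:
  fixes a b :: "real \<Rightarrow> real^'n \<Rightarrow> real"
    and W :: "(real^'n) set" and Xbar :: "real^'n" and c T :: real
  assumes "open W" and "Xbar \<in> W" and "c > 0" and "T > 0"
    and "smooth_bdd_on ({-c<..<T} \<times> W) (\<lambda>p. a (fst p) (snd p))"
    and "smooth_bdd_on ({-c<..<T} \<times> W) (\<lambda>p. b (fst p) (snd p))"
    and "\<forall>t\<in>{0..<T}. \<forall>X\<in>W. 4 * (a t X) ^ 3 - 27 * (b t X) ^ 2 \<ge> 0"
    and "a 0 Xbar = 0"
    and "\<forall>t\<in>{0<..<T}. \<forall>X\<in>W. a t X > 0"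
  shows "\<exists>U C. open U \<and> (0, Xbar) \<in> U \<and> C > 0 \<and>
           (\<forall>t X i. (t, X) \<in> U \<and> t > 0 \<longrightarrow>
              (\<exists>D1 D2 D3.
                 ((\<lambda>s. eig 1 (Smat (a t (X + s *\<^sub>R axis i 1)) (b t (X + s *\<^sub>R axis i 1))))
                    has_real_derivative D1) (at 0) \<and>
                 ((\<lambda>s. eig 2 (Smat (a t (X + s *\<^sub>R axis i 1)) (b t (X + s *\<^sub>R axis i 1))))
                    has_real_derivative D2) (at 0) \<and>
                 ((\<lambda>s. eig 3 (Smat (a t (X + s *\<^sub>R axis i 1)) (b t (X + s *\<^sub>R axis i 1))))
                    has_real_derivative D3) (at 0) \<and>
                 \<bar>D1\<bar> \<le> C * a t X powr (3/2) \<and>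
                 \<bar>D2\<bar> \<le> C * sqrt (a t X) \<and>
                 \<bar>D3\<bar> \<le> C * sqrt (a t X)))"
proof -
  define S where "S = {-c<..<T} \<times> W"
  obtain C where "0 < C" and bounds: "\<And>t X i \<rho>. 0 < \<rho> \<Longrightarrow> a t X < \<rho>^2 \<Longrightarrow> a t X < 1/100 \<Longrightarrow>
      hyperbolic_segment S a b t X i \<rho> \<Longrightarrow>
      eig_derivative_bounds C (\<lambda>s. a t (X + s *\<^sub>R axis i 1)) (\<lambda>s. b t (X + s *\<^sub>R axis i 1))"
    using eig_derivative_bounds_on_coordinate_lines[OF assms(5,6)[folded S_def]] by blast
  obtain r where "0 < r" "ball Xbar r \<subseteq> W"
    using open_contains_ball_eq[OF \<open>open W\<close>] \<open>Xbar \<in> W\<close> by blast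
  then obtain \<rho> where "0 < \<rho>" "ball Xbar (2*\<rho>) \<subseteq> W" by (intro that[of "r/2"]) auto
  define U where "U = ball (0, Xbar) \<rho> \<inter> ((\<lambda>p. a (fst p) (snd p)) -` {..<min (\<rho>^2) (1/100)} \<inter> S)"
  have "open S" using \<open>open W\<close> by (simp add: S_def open_Times)
  moreover have "continuous_on S (\<lambda>p. a (fst p) (snd p))"
    using smooth_bdd_on_imp_continuous_on[OF assms(5)] by (simp add: S_def)
  ultimately have "open U"
    unfolding U_def by (intro open_Int open_ball continuous_on_open_vimage[THEN iffD1, rule_format] open_lessThan)
  moreover have "(0, Xbar) \<in> U" unfolding U_def S_def using assms(2-4,8) \<open>0 < \<rho>\<close> by simp
  moreover have "hyperbolic_segment S a b t X i \<rho>" if "(t, X) \<in> U" "0 < t" for t X i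
  proof -
    have "dist Xbar X < \<rho>" using that(1) dist_snd_le[of "(0, Xbar)" "(t, X)"] by (simp add: U_def)
    then have "X + s *\<^sub>R axis i 1 \<in> W" if "\<bar>s\<bar> \<le> \<rho>" for s
      using dist_add_scaleR_axis_le[of Xbar X s i] that \<open>ball Xbar (2*\<rho>) \<subseteq> W\<close> by auto
    then show ?thesis using that assms(7,9) by (force simp: hyperbolic_segment_def U_def S_def)
  qed
  ultimately show ?thesis
    using \<open>0 < C\<close> \<open>0 < \<rho>\<close> bounds unfolding eig_derivative_bounds_def
    by (intro exI[of _ U] exI[of _ C]) (auto simp: U_def)
qed

end
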